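(* Assume Case 4 holds and let $\mathcal{I}_f^{AR}=[l_1,l_1+l_2]$. Then for every $n\ge1$, $Q^n$ contains the term $z^{\gamma_n}w^{d^n}$, $(\gamma_n,d^n)$ is a vertex of $N(Q^n)$, and for every $l\in\mathcal{I}_f^{AR}$, $$w_l(Q^n)=w_l(z^{\gamma_n}w^{d^n})=\gamma_n+l\,d^n.$$
   Context: Let $f(z,w)=(p(z),q(z,w))$ be a holomorphic skew product germ at the origin of $\mathbb{C}^2$ with $f(0,0)=(0,0)$, where $p(z)=a_\delta z^\delta+O(z^{\delta+1})$ with $a_\delta\neq0$ and integer $\delta\ge1$, and $q(z,w)=\sum_{i+j\ge1}b_{ij}z^iw^j$ is not identically zero. For $n\ge1$ write $f^n=(p^n,Q^n)$. For a nonzero germ $g=\sum g_{ij}z^iw^j$, say $g$ contains $z^aw^b$ if $g_{ab}\neq0$, and for real $l>0$ let $w_l(g)=\min\{i+lj: g_{ij}\neq0\}$. The Newton polygon $N(g)$ is the convex hull of $\bigcup_{g_{ij}\neq0}\{(x,y):x\ge i,\ y\ge j\}$. Let $(n_1,m_1),\dots,(n_s,m_s)$ be the vertices of $N(q)$ with $n_1<\cdots<n_s$, $m_1>\cdots>m_s$; for $1\le k\le s-1$ let $T_k$ be the $y$-intercept of the line through $(n_k,m_k)$ and $(n_{k+1},m_{k+1})$. Case 4 means: $s>2$ and $T_k\le\delta\le T_{k-1}$ for some $2\le k\le s-1$; for this $k$ set $(\gamma,d)=(n_k,m_k)$, $l_1=\frac{n_k-n_{k-1}}{m_{k-1}-m_k}$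 and $l_2$ defined by $l_1+l_2=\frac{n_{k+1}-n_k}{m_k-m_{k+1}}$. Define $\gamma_n=\gamma(\delta^{n-1}+\delta^{n-2}d+\cdots+d^{n-1})$. *)

theory Defs
  imports "HOL-Analysis.Analysis"
begin

text \<open>Formal power series in two variables z, w, represented by their coefficient
  functions: g i j is the coefficient of z^i w^j.\<close>
type_synonym bps = "nat \<Rightarrow> nat \<Rightarrow> complex"

definition bmul :: "bps \<Rightarrow> bps \<Rightarrow> bps" where
  "bmul A B = (\<lambda>a b. \<Sum>i\<le>a. \<Sum>j\<le>b. A i j * B (a - i) (b - j))"

fun bpow :: "bps \<Rightarrow> nat \<Rightarrow> bps" where
  "bpow A 0 = (\<lambda>a b. if a = 0 \<and> b = 0 then 1 else 0)"
| "bpow A (Suc n) = bmul A (bpow A n)"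

text \<open>Substitution g(P(z,w), Q(z,w)) for series P, Q without constant term
  (terms with i + j > a + b do not contribute to the coefficient of z^a w^b).\<close>
definition bcomp :: "bps \<Rightarrow> bps \<Rightarrow> bps \<Rightarrow> bps" where
  "bcomp g P Q = (\<lambda>a b. \<Sum>i\<le>a+b. \<Sum>j\<le>a+b. g i j * bmul (bpow P i) (bpow Q j) a b)"

definition zvar :: bps where "zvar = (\<lambda>a b. if a = 1 \<and> b = 0 then 1 else 0)"
definition wvar :: bps where "wvar = (\<lambda>a b. if a = 0 \<and> b = 1 then 1 else 0)"

definition embed_z :: "(nat \<Rightarrow> complex) \<Rightarrow> bps" where
  "embed_z p = (\<lambda>a b. if b = 0 then p a else 0)"

text \<open>skew_iter p q n = f^n = (p^n, Q^n) for f(z,w) = (p(z), q(z,w)); f^(n+1) = f o f^n.\<close>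
fun skew_iter :: "(nat \<Rightarrow> complex) \<Rightarrow> bps \<Rightarrow> nat \<Rightarrow> bps \<times> bps" where
  "skew_iter p q 0 = (zvar, wvar)"
| "skew_iter p q (Suc n) =
     (let (P, Q) = skew_iter p q n in (bcomp (embed_z p) P Q, bcomp q P Q))"

text \<open>Convergence (holomorphic germ): Cauchy-type coefficient bounds on a polydisc.\<close>
definition conv_germ1 :: "(nat \<Rightarrow> complex) \<Rightarrow> bool" where
  "conv_germ1 c \<longleftrightarrow> (\<exists>\<rho>>0. \<exists>M. \<forall>i. norm (c i) * \<rho> ^ i \<le> M)"

definition conv_germ2 :: "bps \<Rightarrow> bool" where
  "conv_germ2 c \<longleftrightarrow> (\<exists>\<rho>>0. \<exists>M. \<forall>i j. norm (c i j) * \<rho> ^ (i + j) \<le> M)"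

definition newton_polygon :: "bps \<Rightarrow> (real \<times> real) set" where
  "newton_polygon g = convex hull (\<Union>{ {(x, y). real i \<le> x \<and> real j \<le> y} | i j. g i j \<noteq> 0 })"

definition weight :: "real \<Rightarrow> bps \<Rightarrow> real" where
  "weight l g = Inf {real i + l * real j | i j. g i j \<noteq> 0}"

definition monom :: "nat \<Rightarrow> nat \<Rightarrow> bps" where
  "monom a b = (\<lambda>i j. if i = a \<and> j = b then 1 else 0)"

definition yint :: "real \<Rightarrow> real \<Rightarrow> real \<Rightarrow> real \<Rightarrow> real" where
  "yint x1 y1 x2 y2 = y1 - x1 * (y2 - y1) / (x2 - x1)"

end

theory Submission
  imports Defs
begin

(* For l in [l1, l1 + l2] the vertex z^\<gamma> w^d is a lowest term of q for the weight
   i + l j, and the unique one for l in the open interval. The first component of f^n is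
   p^n(z), of order \<delta>^n; substituting (P_n, Q_n) into z^i w^j multiplies weights into
   i \<delta>^n + j w_l(Q_n). The ratio r = w_l(Q_n) / \<delta>^n evolves by r \<mapsto> (\<gamma> + d r) / \<delta>,
   and Case 4 says exactly that this map preserves [l1, l1 + l2]. So z^\<gamma> w^d stays the
   lowest term of q for the rescaled weight, and the leading term of Q_(n+1) is
   z^(\<gamma> \<delta>^n + d \<gamma>_n) w^(d^(n+1)). A term that is lowest for two different slopes is a
   vertex of the Newton polygon. *)

section \<open>Lowest terms of products and substitutions\<close>

definition weight_ge :: "real \<times> real \<Rightarrow> bps \<Rightarrow> real \<Rightarrow> bool" where
  "weight_ge \<omega> A c \<longleftrightarrow> (\<forall>i j. A i j \<noteq> 0 \<longrightarrow> c \<le> \<omega> \<bullet> (real i, real j))"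

definition unique_lowest_term :: "real \<times> real \<Rightarrow> bps \<Rightarrow> nat \<Rightarrow> nat \<Rightarrow> bool" where
  "unique_lowest_term \<omega> A a b \<longleftrightarrow> A a b \<noteq> 0 \<and>
     (\<forall>i j. A i j \<noteq> 0 \<longrightarrow> (i, j) = (a, b) \<or> \<omega> \<bullet> (real a, real b) < \<omega> \<bullet> (real i, real j))"

lemma unique_lowest_term_imp_weight_ge:
  "unique_lowest_term \<omega> A a b \<Longrightarrow> weight_ge \<omega> A (\<omega> \<bullet> (real a, real b))"
  unfolding unique_lowest_term_def weight_ge_def by force

lemma inner_nat_pair_split:
  "i \<le> a \<Longrightarrow> j \<le> b \<Longrightarrow>
    \<omega> \<bullet> (real a, real b) = \<omega> \<bullet> (real i, real j) + \<omega> \<bullet> (real (a - i), real (b - j))"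
  by (simp add: inner_prod_def of_nat_diff algebra_simps)

lemma inner_nat_pair_add:
  "\<omega> \<bullet> (real (a + c), real (b + e)) = \<omega> \<bullet> (real a, real b) + \<omega> \<bullet> (real c, real e)"
  by (simp add: inner_prod_def algebra_simps)

lemma bmul_nonzeroE:
  assumes "bmul A B a b \<noteq> 0"
  obtains i j where "i \<le> a" "j \<le> b" "A i j \<noteq> 0" "B (a - i) (b - j) \<noteq> 0"
proof -
  obtain i where "i \<le> a" "(\<Sum>j\<le>b. A i j * B (a - i) (b - j)) \<noteq> 0"
    using assms unfolding bmul_def by (auto elim: sum.not_neutral_contains_not_neutral)
  moreover from this(2) obtain j where "j \<le> b" "A i j * B (a - i) (b - j) \<noteq> 0"
    by (auto elim: sum.not_neutral_contains_not_neutral)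
  ultimately show thesis using that by simp
qed

lemma bcomp_nonzeroE:
  assumes "bcomp g P Q a b \<noteq> 0"
  obtains i j where "g i j \<noteq> 0" "bmul (bpow P i) (bpow Q j) a b \<noteq> 0"
proof -
  obtain i where "(\<Sum>j\<le>a + b. g i j * bmul (bpow P i) (bpow Q j) a b) \<noteq> 0"
    using assms unfolding bcomp_def by (auto elim: sum.not_neutral_contains_not_neutral)
  then obtain j where "g i j * bmul (bpow P i) (bpow Q j) a b \<noteq> 0"
    by (auto elim: sum.not_neutral_contains_not_neutral)
  then show thesis using that by auto
qed

lemma sum_sum_single:
  assumes "finite S" "finite T" "i0 \<in> S" "j0 \<in> T"
    and "\<And>i j. i \<in> S \<Longrightarrow> j \<in> T \<Longrightarrow> (i, j) \<noteq> (i0, j0) \<Longrightarrow> f i j = 0"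
    and "f i0 j0 = c"
  shows "(\<Sum>i\<in>S. \<Sum>j\<in>T. f i j) = (c :: complex)"
proof -
  have "(\<Sum>i\<in>S. \<Sum>j\<in>T. f i j) = (\<Sum>i\<in>{i0}. \<Sum>j\<in>T. f i j)"
    using assms(1,3,5) by (intro sum.mono_neutral_right) (auto intro!: sum.neutral)
  also have "\<dots> = f i0 j0 + (\<Sum>j\<in>T - {j0}. f i0 j)"
    using assms(2,4) by (simp add: sum.remove)
  also have "\<dots> = f i0 j0"
    using assms(3,5) by (simp add: sum.neutral)
  finally show ?thesis using assms(6) by simp
qed

lemma weight_ge_bmul:
  assumes "weight_ge \<omega> A \<alpha>" "weight_ge \<omega> B \<beta>"
  shows "weight_ge \<omega> (bmul A B) (\<alpha> + \<beta>)"
  unfolding weight_ge_def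
proof (intro allI impI)
  fix a b assume "bmul A B a b \<noteq> 0"
  then obtain i j where ij: "i \<le> a" "j \<le> b" "A i j \<noteq> 0" "B (a - i) (b - j) \<noteq> 0"
    by (rule bmul_nonzeroE)
  then have "\<alpha> + \<beta> \<le> \<omega> \<bullet> (real i, real j) + \<omega> \<bullet> (real (a - i), real (b - j))"
    using assms unfolding weight_ge_def by (meson add_mono)
  with ij show "\<alpha> + \<beta> \<le> \<omega> \<bullet> (real a, real b)"
    using inner_nat_pair_split[OF ij(1,2), of \<omega>] by linarith
qed

lemma unique_lowest_term_bmul:
  assumes A: "unique_lowest_term \<omega> A a1 b1" and B: "unique_lowest_term \<omega> B a2 b2"
  shows "unique_lowest_term \<omega> (bmul A B) (a1 + a2) (b1 + b2)"
proof -
  let ?w = "\<lambda>i j. \<omega> \<bullet> (real i, real j)"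
  have factors: "i = a1 \<and> j = b1 \<and> a - i = a2 \<and> b - j = b2"
    if "i \<le> a" "j \<le> b" "A i j \<noteq> 0" "B (a - i) (b - j) \<noteq> 0" "?w a b \<le> ?w a1 b1 + ?w a2 b2" for i j a b
  proof -
    have split: "?w a b = ?w i j + ?w (a - i) (b - j)"
      using that(1,2) by (rule inner_nat_pair_split)
    have A': "(i, j) = (a1, b1) \<or> ?w a1 b1 < ?w i j"
      using A that(3) unfolding unique_lowest_term_def by blast
    have B': "(a - i, b - j) = (a2, b2) \<or> ?w a2 b2 < ?w (a - i) (b - j)"
      using B that(4) unfolding unique_lowest_term_def by blast
    have "?w a1 b1 \<le> ?w i j" "?w a2 b2 \<le> ?w (a - i) (b - j)"
      using A' B' by auto
    then have "\<not> ?w a1 b1 < ?w i j" "\<not> ?w a2 b2 < ?w (a - i) (b - j)"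
      using split that(5) by linarith+
    then show ?thesis using A' B' by simp
  qed
  have "bmul A B (a1 + a2) (b1 + b2) = A a1 b1 * B a2 b2"
    unfolding bmul_def
  proof (rule sum_sum_single)
    fix i j assume "i \<in> {..a1 + a2}" "j \<in> {..b1 + b2}" "(i, j) \<noteq> (a1, b1)"
    then show "A i j * B (a1 + a2 - i) (b1 + b2 - j) = 0"
      using factors[of i "a1 + a2" j "b1 + b2"] unfolding inner_nat_pair_add by auto
  qed simp_all
  then have "bmul A B (a1 + a2) (b1 + b2) \<noteq> 0"
    using A B unfolding unique_lowest_term_def by simp
  moreover have "(a, b) = (a1 + a2, b1 + b2) \<or> ?w (a1 + a2) (b1 + b2) < ?w a b"
    if "bmul A B a b \<noteq> 0" for a b
  proof (cases "?w a b \<le> ?w a1 b1 + ?w a2 b2")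
    case True
    obtain i j where "i \<le> a" "j \<le> b" "A i j \<noteq> 0" "B (a - i) (b - j) \<noteq> 0"
      using \<open>bmul A B a b \<noteq> 0\<close> by (rule bmul_nonzeroE)
    with factors[OF this True] show ?thesis by (intro disjI1) auto
  qed (unfold inner_nat_pair_add, linarith)
  ultimately show ?thesis unfolding unique_lowest_term_def by simp
qed

lemma weight_ge_bpow:
  assumes "weight_ge \<omega> A \<alpha>"
  shows "weight_ge \<omega> (bpow A n) (real n * \<alpha>)"
proof (induction n)
  case 0
  show ?case by (simp add: weight_ge_def inner_prod_def)
next
  case (Suc n)
  then show ?case using weight_ge_bmul[OF assms Suc] by (simp add: algebra_simps)
qed

lemma unique_lowest_term_bpow:
  assumes "unique_lowest_term \<omega> A a b"
  shows "unique_lowest_term \<omega> (bpow A n) (n * a) (n * b)"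
proof (induction n)
  case 0
  show ?case by (simp add: unique_lowest_term_def)
next
  case (Suc n)
  then show ?case using unique_lowest_term_bmul[OF assms Suc] by simp
qed

lemma weight_ge_bcomp:
  assumes "weight_ge \<omega> P \<alpha>" "weight_ge \<omega> Q \<beta>" "weight_ge (\<alpha>, \<beta>) g \<theta>"
  shows "weight_ge \<omega> (bcomp g P Q) \<theta>"
  unfolding weight_ge_def
proof (intro allI impI)
  fix a b assume "bcomp g P Q a b \<noteq> 0"
  then obtain i j where ij: "g i j \<noteq> 0" "bmul (bpow P i) (bpow Q j) a b \<noteq> 0"
    by (rule bcomp_nonzeroE)
  have "real i * \<alpha> + real j * \<beta> \<le> \<omega> \<bullet> (real a, real b)"
    using weight_ge_bmul[OF weight_ge_bpow[OF assms(1)] weight_ge_bpow[OF assms(2)]] ij(2)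
    unfolding weight_ge_def by blast
  moreover have "\<theta> \<le> real i * \<alpha> + real j * \<beta>"
    using assms(3) ij(1) unfolding weight_ge_def by (simp add: mult.commute)
  ultimately show "\<theta> \<le> \<omega> \<bullet> (real a, real b)" by linarith
qed

lemma bcomp_single_term:
  assumes "i0 + j0 \<le> a + b"
    and "\<And>i j. g i j \<noteq> 0 \<Longrightarrow> (i, j) \<noteq> (i0, j0) \<Longrightarrow> bmul (bpow P i) (bpow Q j) a b = 0"
  shows "bcomp g P Q a b = g i0 j0 * bmul (bpow P i0) (bpow Q j0) a b"
  unfolding bcomp_def by (intro sum_sum_single) (use assms in auto)

lemma unique_lowest_term_bcomp:
  assumes P: "unique_lowest_term \<omega> P a1 b1" and Q: "unique_lowest_term \<omega> Q a2 b2"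
    and nonconst: "(a1, b1) \<noteq> (0, 0)" "(a2, b2) \<noteq> (0, 0)"
    and g: "unique_lowest_term (\<omega> \<bullet> (real a1, real b1), \<omega> \<bullet> (real a2, real b2)) g i0 j0"
  shows "unique_lowest_term \<omega> (bcomp g P Q) (i0 * a1 + j0 * a2) (i0 * b1 + j0 * b2)"
proof -
  define \<alpha> \<beta> where "\<alpha> = \<omega> \<bullet> (real a1, real b1)" and "\<beta> = \<omega> \<bullet> (real a2, real b2)"
  define A B where "A = i0 * a1 + j0 * a2" and "B = i0 * b1 + j0 * b2"
  let ?R = "\<lambda>i j. bmul (bpow P i) (bpow Q j)"
  have R_ge: "weight_ge \<omega> (?R i j) (real i * \<alpha> + real j * \<beta>)" for i j
    using weight_ge_bmul[OF weight_ge_bpow weight_ge_bpow] P Q unique_lowest_term_imp_weight_ge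
    unfolding \<alpha>_def \<beta>_def by blast
  have R0: "unique_lowest_term \<omega> (?R i0 j0) A B"
    unfolding A_def B_def
    by (intro unique_lowest_term_bmul unique_lowest_term_bpow P Q)
  have wAB: "\<omega> \<bullet> (real A, real B) = real i0 * \<alpha> + real j0 * \<beta>"
    unfolding A_def B_def \<alpha>_def \<beta>_def by (simp add: inner_prod_def algebra_simps)
  have heavier: "\<omega> \<bullet> (real A, real B) < real i * \<alpha> + real j * \<beta>"
    if "g i j \<noteq> 0" "(i, j) \<noteq> (i0, j0)" for i j
    using g that unfolding unique_lowest_term_def wAB \<alpha>_def \<beta>_def
    by (force simp: mult.commute)
  have vanish: "?R i j A B = 0" if "g i j \<noteq> 0" "(i, j) \<noteq> (i0, j0)" for i j
    using heavier[OF that] R_ge[of i j] unfolding weight_ge_def by force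
  \<comment> \<open>bcomp only sums over i, j \<le> a + b; the nonconstant lowest terms keep (i0, j0) in range.\<close>
  have "1 \<le> a1 + b1" "1 \<le> a2 + b2"
    using nonconst by auto
  then have "i0 * 1 + j0 * 1 \<le> i0 * (a1 + b1) + j0 * (a2 + b2)"
    by (intro add_mono mult_le_mono2)
  then have "i0 + j0 \<le> A + B"
    unfolding A_def B_def by (simp add: algebra_simps)
  then have "bcomp g P Q A B = g i0 j0 * ?R i0 j0 A B"
    using vanish by (rule bcomp_single_term)
  then have "bcomp g P Q A B \<noteq> 0"
    using g R0 unfolding unique_lowest_term_def by simp
  moreover have "(a, b) = (A, B) \<or> \<omega> \<bullet> (real A, real B) < \<omega> \<bullet> (real a, real b)"
    if "bcomp g P Q a b \<noteq> 0" for a b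
  proof -
    obtain i j where ij: "g i j \<noteq> 0" "?R i j a b \<noteq> 0"
      using \<open>bcomp g P Q a b \<noteq> 0\<close> by (rule bcomp_nonzeroE)
    show ?thesis
    proof (cases "(i, j) = (i0, j0)")
      case True
      then show ?thesis using R0 ij(2) unfolding unique_lowest_term_def by blast
    next
      case False
      then have "\<omega> \<bullet> (real A, real B) < real i * \<alpha> + real j * \<beta>"
        using heavier ij(1) by blast
      also have "\<dots> \<le> \<omega> \<bullet> (real a, real b)"
        using R_ge[of i j] ij(2) unfolding weight_ge_def by blast
      finally show ?thesis by blast
    qed
  qed
  ultimately show ?thesis unfolding unique_lowest_term_def A_def B_def by simp
qed

lemma weight_ge_cone:
  assumes "weight_ge (1, l1) g ((1, l1) \<bullet> (real a, real b))"
    and "weight_ge (1, l2) g ((1, l2) \<bullet> (real a, real b))"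
    and "0 \<le> D" "l1 * D \<le> X" "X \<le> l2 * D"
  shows "weight_ge (D, X) g ((D, X) \<bullet> (real a, real b))"
  unfolding weight_ge_def
proof (intro allI impI)
  fix i j assume "g i j \<noteq> 0"
  define u v where "u = real i - real a" and "v = real j - real b"
  have h1: "0 \<le> u + l1 * v" and h2: "0 \<le> u + l2 * v"
    using assms(1,2) \<open>g i j \<noteq> 0\<close> unfolding weight_ge_def u_def v_def
    by (force simp: algebra_simps)+
  have "0 \<le> D * u + X * v"
  proof (cases "0 \<le> v")
    case True
    then have "l1 * D * v \<le> X * v" by (rule mult_right_mono[OF assms(4)])
    moreover have "0 \<le> D * (u + l1 * v)" using assms(3) h1 by simp
    ultimately show ?thesis by (simp add: algebra_simps)
  next
    case False
    then have "l2 * D * v \<le> X * v" using assms(5) by (simp add: mult_right_mono_neg)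
    moreover have "0 \<le> D * (u + l2 * v)" using assms(3) h2 by simp
    ultimately show ?thesis by (simp add: algebra_simps)
  qed
  then show "(D, X) \<bullet> (real a, real b) \<le> (D, X) \<bullet> (real i, real j)"
    unfolding u_def v_def by (simp add: algebra_simps)
qed

lemma unique_lowest_term_cone:
  assumes "g a b \<noteq> 0"
    and "weight_ge (1, l1) g ((1, l1) \<bullet> (real a, real b))"
    and "weight_ge (1, l2) g ((1, l2) \<bullet> (real a, real b))"
    and "0 < D" "l1 * D < X" "X < l2 * D"
  shows "unique_lowest_term (D, X) g a b"
  unfolding unique_lowest_term_def
proof (intro conjI allI impI assms(1))
  fix i j assume "g i j \<noteq> 0"
  define u v where "u = real i - real a" and "v = real j - real b"
  have h1: "0 \<le> u + l1 * v" and h2: "0 \<le> u + l2 * v"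
    using assms(2,3) \<open>g i j \<noteq> 0\<close> unfolding weight_ge_def u_def v_def
    by (force simp: algebra_simps)+
  have "(i, j) = (a, b) \<or> 0 < D * u + X * v"
  proof (cases "v = 0")
    case True
    then have "u = 0 \<or> 0 < D * u" using h1 assms(4) by (auto simp: less_eq_real_def)
    then show ?thesis using True unfolding u_def v_def by auto
  next
    case False
    then consider "0 < v" | "v < 0" by linarith
    then show ?thesis
    proof cases
      case 1
      then have "l1 * D * v < X * v" using assms(5) by simp
      moreover have "0 \<le> D * (u + l1 * v)" using assms(4) h1 by simp
      ultimately show ?thesis by (simp add: algebra_simps)
    next
      case 2
      then have "l2 * D * v < X * v" using assms(6) by simp
      moreover have "0 \<le> D * (u + l2 * v)" using assms(4) h2 by simp
      ultimately show ?thesis by (simp add: algebra_simps)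
    qed
  qed
  then show "(i, j) = (a, b) \<or> (D, X) \<bullet> (real a, real b) < (D, X) \<bullet> (real i, real j)"
    unfolding u_def v_def by (simp add: algebra_simps)
qed

section \<open>Newton polygons\<close>

definition support_quadrants :: "bps \<Rightarrow> (real \<times> real) set" where
  "support_quadrants g = \<Union>{{(x, y). real i \<le> x \<and> real j \<le> y} | i j. g i j \<noteq> 0}"

lemma newton_polygon_eq: "newton_polygon g = convex hull (support_quadrants g)"
  unfolding newton_polygon_def support_quadrants_def ..

lemma mem_support_quadrants:
  "v \<in> support_quadrants g \<longleftrightarrow> (\<exists>i j. g i j \<noteq> 0 \<and> real i \<le> fst v \<and> real j \<le> snd v)"
  unfolding support_quadrants_def by (cases v) auto

lemma support_in_newton_polygon: "g i j \<noteq> 0 \<Longrightarrow> (real i, real j) \<in> newton_polygon g"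
  unfolding newton_polygon_eq by (rule hull_inc) (auto simp: support_quadrants_def)

lemma newton_polygon_weight_ge:
  assumes "weight_ge \<omega> g c" "0 \<le> fst \<omega>" "0 \<le> snd \<omega>" "v \<in> newton_polygon g"
  shows "c \<le> \<omega> \<bullet> v"
proof -
  have "support_quadrants g \<subseteq> {v. \<omega> \<bullet> v \<ge> c}"
  proof
    fix v assume "v \<in> support_quadrants g"
    then obtain i j where "g i j \<noteq> 0" "real i \<le> fst v" "real j \<le> snd v"
      unfolding mem_support_quadrants by blast
    then have "c \<le> \<omega> \<bullet> (real i, real j)" "\<omega> \<bullet> (real i, real j) \<le> \<omega> \<bullet> v"
      using assms(1-3) unfolding weight_ge_def by (auto simp: inner_prod_def intro!: add_mono mult_left_mono)
    then show "v \<in> {v. \<omega> \<bullet> v \<ge> c}" by simp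
  qed
  then have "newton_polygon g \<subseteq> {v. \<omega> \<bullet> v \<ge> c}"
    unfolding newton_polygon_eq by (intro hull_minimal convex_halfspace_ge)
  then show ?thesis using assms(4) by blast
qed

lemma newton_polygon_shift_up:
  assumes "v \<in> newton_polygon g" "0 \<le> t"
  shows "v + (0, t) \<in> newton_polygon g"
proof -
  have "(\<lambda>x. (0, t) + x) ` support_quadrants g \<subseteq> support_quadrants g"
  proof (clarsimp simp: mem_support_quadrants)
    fix x y i j assume "g i j \<noteq> 0" "real i \<le> x" "real j \<le> y"
    then show "\<exists>i j. g i j \<noteq> 0 \<and> real i \<le> x \<and> real j \<le> t + y"
      using assms(2) by (intro exI[of _ i] exI[of _ j]) simp
  qed
  then have "(\<lambda>x. (0, t) + x) ` newton_polygon g \<subseteq> newton_polygon g"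
    unfolding newton_polygon_eq convex_hull_translation[symmetric] by (rule hull_mono)
  then show ?thesis using assms(1) by (force simp: add.commute)
qed

lemma extreme_point_of_newton_polygonE:
  assumes "v extreme_point_of newton_polygon g"
  obtains i j where "v = (real i, real j)" "g i j \<noteq> 0"
proof -
  have "v \<in> support_quadrants g"
    using assms unfolding newton_polygon_eq by (rule extreme_point_of_convex_hull)
  then obtain i j where ij: "g i j \<noteq> 0" "real i \<le> fst v" "real j \<le> snd v"
    unfolding mem_support_quadrants by blast
  define u where "u = (real i, real j)"
  have "v = u"
  proof (rule ccontr)
    assume "v \<noteq> u"
    have "u \<in> support_quadrants g" "2 *\<^sub>R v - u \<in> support_quadrants g"
      unfolding mem_support_quadrants u_def using ij by force+
    then have "u \<in> newton_polygon g" "2 *\<^sub>R v - u \<in> newton_polygon g"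
      unfolding newton_polygon_eq by (auto intro: hull_inc)
    moreover have "u \<noteq> 2 *\<^sub>R v - u"
      using \<open>v \<noteq> u\<close> by (auto simp: algebra_simps scaleR_2 prod_eq_iff)
    then have "v \<in> open_segment u (2 *\<^sub>R v - u)"
      unfolding in_segment by (intro conjI exI[of _ "1/2"]) (auto simp: algebra_simps)
    ultimately show False using assms unfolding extreme_point_of_def by blast
  qed
  then show thesis using that ij(1) unfolding u_def by blast
qed

lemma extreme_point_of_Int_two_supporting_hyperplanes:
  fixes S :: "'a::euclidean_space set"
  assumes "convex S" "\<And>x. x \<in> S \<Longrightarrow> b1 \<le> a1 \<bullet> x"
    and "\<And>x. x \<in> S \<Longrightarrow> a1 \<bullet> x = b1 \<Longrightarrow> b2 \<le> a2 \<bullet> x"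
    and "S \<inter> {x. a1 \<bullet> x = b1} \<inter> {x. a2 \<bullet> x = b2} = {c}"
  shows "c extreme_point_of S"
proof -
  let ?F = "S \<inter> {x. a1 \<bullet> x = b1}"
  have "?F face_of S"
    using assms(1,2) by (rule face_of_Int_supporting_hyperplane_ge)
  moreover have "c extreme_point_of ?F"
    using assms(3,4) by (intro extreme_point_of_Int_supporting_hyperplane_ge) auto
  ultimately show ?thesis using extreme_point_of_face by blast
qed

lemma extreme_point_of_newton_polygon:
  assumes "g a b \<noteq> 0" "0 \<le> l1" "l1 < l2"
    and "weight_ge (1, l1) g ((1, l1) \<bullet> (real a, real b))"
    and "weight_ge (1, l2) g ((1, l2) \<bullet> (real a, real b))"
  shows "(real a, real b) extreme_point_of newton_polygon g"
proof (rule extreme_point_of_Int_two_supporting_hyperplanes)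
  show "convex (newton_polygon g)"
    unfolding newton_polygon_eq by simp
  show "(1, l1) \<bullet> (real a, real b) \<le> (1, l1) \<bullet> x" if "x \<in> newton_polygon g" for x
    using newton_polygon_weight_ge[OF assms(4) _ _ that] assms(2) by simp
  show "(1, l2) \<bullet> (real a, real b) \<le> (1, l2) \<bullet> x" if "x \<in> newton_polygon g" for x
    using newton_polygon_weight_ge[OF assms(5) _ _ that] assms(2,3) by simp
  have "x = (real a, real b)"
    if "(1, l1) \<bullet> x = (1, l1) \<bullet> (real a, real b)" "(1, l2) \<bullet> x = (1, l2) \<bullet> (real a, real b)" for x
  proof -
    have "(l2 - l1) * snd x = (l2 - l1) * real b"
      using that by (simp add: inner_prod_def algebra_simps)
    then show ?thesis using that assms(3) by (simp add: inner_prod_def prod_eq_iff)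
  qed
  then show "newton_polygon g \<inter> {x. (1, l1) \<bullet> x = (1, l1) \<bullet> (real a, real b)}
      \<inter> {x. (1, l2) \<bullet> x = (1, l2) \<bullet> (real a, real b)} = {(real a, real b)}"
    using support_in_newton_polygon[of g a b, OF assms(1)] by blast
qed

lemma convex_lex_superlevel:
  fixes a e :: "'a::real_inner"
  shows "convex {x. m \<le> a \<bullet> x \<and> (a \<bullet> x = m \<longrightarrow> c \<le> e \<bullet> x)}"
proof (rule convexI, clarify)
  fix u w :: 'a and s t :: real
  assume u: "m \<le> a \<bullet> u" "a \<bullet> u = m \<longrightarrow> c \<le> e \<bullet> u"
    and w: "m \<le> a \<bullet> w" "a \<bullet> w = m \<longrightarrow> c \<le> e \<bullet> w"
    and st: "0 \<le> s" "0 \<le> t" "s + t = 1"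
  have "s * m \<le> s * (a \<bullet> u)" "t * m \<le> t * (a \<bullet> w)"
    using u(1) w(1) st by (simp_all add: mult_left_mono)
  moreover have "s * m + t * m = m" using st(3) by (simp flip: distrib_right)
  ultimately have ge: "m \<le> a \<bullet> (s *\<^sub>R u + t *\<^sub>R w)"
    by (simp add: inner_add_right)
  moreover have "c \<le> e \<bullet> (s *\<^sub>R u + t *\<^sub>R w)" if "a \<bullet> (s *\<^sub>R u + t *\<^sub>R w) = m"
  proof -
    have "s * (a \<bullet> u) + t * (a \<bullet> w) = m"
      using that by (simp add: inner_add_right)
    then have "s * m = s * (a \<bullet> u)" "t * m = t * (a \<bullet> w)"
      using \<open>s * m \<le> _\<close> \<open>t * m \<le> _\<close> \<open>s * m + t * m = m\<close> by linarith+
    then have "s = 0 \<or> a \<bullet> u = m" "t = 0 \<or> a \<bullet> w = m"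
      by auto
    then have "s * c \<le> s * (e \<bullet> u)" "t * c \<le> t * (e \<bullet> w)"
      using u(2) w(2) st by (auto intro: mult_left_mono)
    moreover have "s * c + t * c = c" using st(3) by (simp flip: distrib_right)
    ultimately show ?thesis by (simp add: inner_add_right)
  qed
  ultimately show "m \<le> a \<bullet> (s *\<^sub>R u + t *\<^sub>R w) \<and>
      (a \<bullet> (s *\<^sub>R u + t *\<^sub>R w) = m \<longrightarrow> c \<le> e \<bullet> (s *\<^sub>R u + t *\<^sub>R w))"
    by blast
qed

lemma finite_weight_le:
  assumes "0 < l"
  shows "finite {p :: nat \<times> nat. (1, l) \<bullet> (real (fst p), real (snd p)) \<le> c}"
proof (rule finite_subset)
  show "{p :: nat \<times> nat. (1, l) \<bullet> (real (fst p), real (snd p)) \<le> c}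
      \<subseteq> {..nat \<lceil>c\<rceil>} \<times> {..nat \<lceil>c / l\<rceil>}"
  proof clarsimp
    fix i j :: nat assume le: "real i + l * real j \<le> c"
    moreover have "0 \<le> l * real j" using assms by simp
    ultimately have "real i \<le> c" "l * real j \<le> c" by linarith+
    then have "real i \<le> c" "real j \<le> c / l"
      using assms by (simp_all add: pos_le_divide_eq mult.commute)
    then show "i \<le> nat \<lceil>c\<rceil> \<and> j \<le> nat \<lceil>c / l\<rceil>"
      using real_nat_ceiling_ge[of c] real_nat_ceiling_ge[of "c / l"] by linarith
  qed
qed simp

lemma leftmost_lowest_support:
  assumes "g i0 j0 \<noteq> 0" "0 < l"
  obtains a b where "g a b \<noteq> 0" "(1, l) \<bullet> (real a, real b) \<le> (1, l) \<bullet> (real i0, real j0)"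
    "\<And>i j. g i j \<noteq> 0 \<Longrightarrow> (1, l) \<bullet> (real a, real b) \<le> (1, l) \<bullet> (real i, real j)"
    "\<And>i j. g i j \<noteq> 0 \<Longrightarrow> (1, l) \<bullet> (real i, real j) = (1, l) \<bullet> (real a, real b) \<Longrightarrow> a \<le> i"
proof -
  define w where "w p = (1, l) \<bullet> (real (fst p), real (snd p))" for p :: "nat \<times> nat"
  define F where "F = {p. g (fst p) (snd p) \<noteq> 0 \<and> w p \<le> w (i0, j0)}"
  have "finite F"
    using finite_weight_le[OF assms(2)] unfolding F_def w_def by (rule rev_finite_subset) auto
  moreover have "(i0, j0) \<in> F" using assms(1) unfolding F_def by simp
  ultimately obtain p0 where p0: "p0 \<in> F" "\<And>p. p \<in> F \<Longrightarrow> w p0 \<le> w p"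
    using ex_is_arg_min_if_finite[of F w] unfolding is_arg_min_linorder by blast
  define G where "G = {p \<in> F. w p = w p0}"
  have "finite G" "p0 \<in> G" using \<open>finite F\<close> p0(1) unfolding G_def by auto
  then obtain a b where ab: "(a, b) \<in> G" "\<And>p. p \<in> G \<Longrightarrow> a \<le> fst p"
    using ex_is_arg_min_if_finite[of G fst] unfolding is_arg_min_linorder by fastforce
  have "w (a, b) \<le> w (i0, j0)" using ab(1) unfolding G_def F_def by simp
  moreover have "w (a, b) \<le> w (i, j)" if "g i j \<noteq> 0" for i j
    using that p0(2)[of "(i, j)"] ab(1) \<open>w (a, b) \<le> w (i0, j0)\<close> unfolding F_def G_def by force
  moreover have "a \<le> i" if "g i j \<noteq> 0" "w (i, j) = w (a, b)" for i j
    using that ab \<open>w (a, b) \<le> w (i0, j0)\<close> unfolding F_def G_def by force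
  moreover have "g a b \<noteq> 0" using ab(1) unfolding G_def F_def by simp
  ultimately show thesis using that unfolding w_def by simp
qed

lemma extreme_point_of_newton_polygon_leftmost:
  assumes "g a b \<noteq> 0" "0 < l"
    and lowest: "\<And>i j. g i j \<noteq> 0 \<Longrightarrow> (1, l) \<bullet> (real a, real b) \<le> (1, l) \<bullet> (real i, real j)"
    and leftmost: "\<And>i j. g i j \<noteq> 0 \<Longrightarrow> (1, l) \<bullet> (real i, real j) = (1, l) \<bullet> (real a, real b) \<Longrightarrow> a \<le> i"
  shows "(real a, real b) extreme_point_of newton_polygon g"
proof (rule extreme_point_of_Int_two_supporting_hyperplanes)
  define m where "m = (1, l) \<bullet> (real a, real b)"
  have "support_quadrants g \<subseteq> {x. m \<le> (1, l) \<bullet> x \<and> ((1, l) \<bullet> x = m \<longrightarrow> real a \<le> (1, 0) \<bullet> x)}"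
  proof clarify
    fix x y assume "(x, y) \<in> support_quadrants g"
    then obtain i j where ij: "g i j \<noteq> 0" "real i \<le> x" "real j \<le> y"
      unfolding mem_support_quadrants by auto
    have "l * real j \<le> l * y" using ij(3) assms(2) by simp
    then have "(1, l) \<bullet> (real i, real j) \<le> (1, l) \<bullet> (x, y)" using ij(2) by simp
    moreover have "(1, l) \<bullet> (x, y) = m \<Longrightarrow> real i = x \<and> (1, l) \<bullet> (real i, real j) = m"
      using lowest[OF ij(1)] \<open>(1, l) \<bullet> (real i, real j) \<le> _\<close> \<open>l * real j \<le> l * y\<close> ij(2)
      unfolding m_def by auto
    ultimately show "m \<le> (1, l) \<bullet> (x, y) \<and> ((1, l) \<bullet> (x, y) = m \<longrightarrow> real a \<le> (1, 0) \<bullet> (x, y))"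
      using lowest[OF ij(1)] leftmost[OF ij(1)] unfolding m_def by auto
  qed
  then have NP: "newton_polygon g \<subseteq>
      {x. m \<le> (1, l) \<bullet> x \<and> ((1, l) \<bullet> x = m \<longrightarrow> real a \<le> (1, 0) \<bullet> x)}"
    unfolding newton_polygon_eq by (intro hull_minimal convex_lex_superlevel)
  show "convex (newton_polygon g)" unfolding newton_polygon_eq by simp
  show "m \<le> (1, l) \<bullet> x" "(1, l) \<bullet> x = m \<Longrightarrow> real a \<le> (1, 0) \<bullet> x"
    if "x \<in> newton_polygon g" for x
    using NP that by auto
  have "x = (real a, real b)" if "(1, l) \<bullet> x = m" "(1, 0) \<bullet> x = real a" for x
    using that assms(2) unfolding m_def by (simp add: inner_prod_def prod_eq_iff)
  then show "newton_polygon g \<inter> {x. (1, l) \<bullet> x = m} \<inter> {x. (1, 0) \<bullet> x = real a}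
      = {(real a, real b)}"
    using support_in_newton_polygon[of g a b, OF assms(1)] unfolding m_def by auto
qed

lemma newton_polygon_extreme_point_le:
  assumes "g i0 j0 \<noteq> 0" "0 < l"
  obtains v where "v extreme_point_of newton_polygon g"
    "(1, l) \<bullet> v \<le> (1, l) \<bullet> (real i0, real j0)"
proof -
  obtain a b where ab: "g a b \<noteq> 0" "(1, l) \<bullet> (real a, real b) \<le> (1, l) \<bullet> (real i0, real j0)"
    "\<And>i j. g i j \<noteq> 0 \<Longrightarrow> (1, l) \<bullet> (real a, real b) \<le> (1, l) \<bullet> (real i, real j)"
    "\<And>i j. g i j \<noteq> 0 \<Longrightarrow> (1, l) \<bullet> (real i, real j) = (1, l) \<bullet> (real a, real b) \<Longrightarrow> a \<le> i"
    using leftmost_lowest_support[where g = g, OF assms] by blast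
  show thesis
    using that[OF extreme_point_of_newton_polygon_leftmost[where g = g and a = a and b = b,
          OF ab(1) assms(2) ab(3,4)] ab(2)] .
qed

lemma not_extreme_point_between:
  assumes "L \<in> newton_polygon g" "R \<in> newton_polygon g"
    and "fst L < fst M" "fst M < fst R" "0 < l"
    and "(1, l) \<bullet> L \<le> (1, l) \<bullet> M" "(1, l) \<bullet> R \<le> (1, l) \<bullet> M"
  shows "\<not> M extreme_point_of newton_polygon g"
proof
  assume ext: "M extreme_point_of newton_polygon g"
  define \<tau> where "\<tau> = (fst M - fst L) / (fst R - fst L)"
  have \<tau>: "0 < \<tau>" "\<tau> < 1" using assms(3,4) unfolding \<tau>_def by (auto simp: field_simps)
  define p where "p = (1 - \<tau>) *\<^sub>R L + \<tau> *\<^sub>R R"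
  have p: "p \<in> newton_polygon g"
    using assms(1,2) \<tau> unfolding p_def newton_polygon_eq by (intro convexD) auto
  have "\<tau> * (fst R - fst L) = fst M - fst L"
    using assms(3,4) unfolding \<tau>_def by simp
  then have fst_p: "fst p = fst M"
    unfolding p_def by (simp add: algebra_simps)
  have "(1, l) \<bullet> p = (1 - \<tau>) * ((1, l) \<bullet> L) + \<tau> * ((1, l) \<bullet> R)"
    unfolding p_def by (simp add: inner_add_right)
  also have "\<dots> \<le> (1 - \<tau>) * ((1, l) \<bullet> M) + \<tau> * ((1, l) \<bullet> M)"
    using \<tau> assms(6,7) by (intro add_mono mult_left_mono) auto
  finally have "snd p \<le> snd M"
    using fst_p assms(5) by (simp add: inner_prod_def algebra_simps)
  then obtain t where t: "0 \<le> t" "M = p + (0, t)"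
    using fst_p by (intro that[of "snd M - snd p"]) (auto simp: prod_eq_iff)
  show False
  proof (cases "t = 0")
    case True
    then have "M \<in> open_segment L R"
      using t(2) \<tau> assms(3,4) unfolding p_def in_segment
      by (intro conjI exI[of _ \<tau>]) (auto simp: zero_prod_def[symmetric])
    then show False using ext assms(1,2) unfolding extreme_point_of_def by blast
  next
    case False
    have "p + (0, 2 * t) \<in> newton_polygon g"
      using p t(1) by (intro newton_polygon_shift_up) auto
    moreover have "M \<in> open_segment p (p + (0, 2 * t))"
      using False t(2) unfolding in_segment
      by (intro conjI exI[of _ "1/2"]) (auto simp: prod_eq_iff field_simps)
    ultimately show False using ext p unfolding extreme_point_of_def by blast
  qed
qed

lemma weight_eq_lowest:
  assumes "g a b \<noteq> 0" "weight_ge (1, l) g ((1, l) \<bullet> (real a, real b))"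
  shows "weight l g = real a + l * real b"
  unfolding weight_def
proof (rule cInf_eq_minimum)
  show "real a + l * real b \<in> {real i + l * real j |i j. g i j \<noteq> 0}"
    using assms(1) by blast
qed (use assms(2) in \<open>auto simp: weight_ge_def\<close>)

lemma weight_monom: "weight l (monom a b) = real a + l * real b"
  by (rule weight_eq_lowest) (auto simp: monom_def weight_ge_def)

section \<open>Iterates of the skew product\<close>

definition z_order :: "bps \<Rightarrow> nat \<Rightarrow> bool" where
  "z_order P m \<longleftrightarrow> P m 0 \<noteq> 0 \<and> (\<forall>i j. P i j \<noteq> 0 \<longrightarrow> j = 0 \<and> m \<le> i)"

lemma z_order_iff:
  "z_order P m \<longleftrightarrow> unique_lowest_term (1, l) P m 0 \<and> (\<forall>i j. P i j \<noteq> 0 \<longrightarrow> j = 0)"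
proof -
  have "(i, j) = (m, 0) \<or> (1, l) \<bullet> (real m, real 0) < (1, l) \<bullet> (real i, real j) \<longleftrightarrow> m \<le> i"
    if "j = 0" for i j
    using that by auto
  then show ?thesis unfolding z_order_def unique_lowest_term_def by blast
qed

lemma unique_lowest_term_embed_z:
  assumes "p \<delta> \<noteq> 0" "\<forall>i<\<delta>. p i = 0" "0 < fst \<omega>"
  shows "unique_lowest_term \<omega> (embed_z p) \<delta> 0"
  unfolding unique_lowest_term_def
proof (intro conjI allI impI)
  show "embed_z p \<delta> 0 \<noteq> 0" using assms(1) by (simp add: embed_z_def)
  fix i j assume "embed_z p i j \<noteq> 0"
  then have "j = 0" "p i \<noteq> 0" unfolding embed_z_def by (auto split: if_splits)
  then have "j = 0" "\<delta> \<le> i" using assms(2) not_le by blast+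
  then show "(i, j) = (\<delta>, 0) \<or> \<omega> \<bullet> (real \<delta>, real 0) < \<omega> \<bullet> (real i, real j)"
    using assms(3) by (cases "i = \<delta>") (auto simp: inner_prod_def)
qed

lemma bmul_one_right: "bmul A (\<lambda>a b. if a = 0 \<and> b = 0 then 1 else 0) = A"
proof (intro ext)
  fix a b
  show "bmul A (\<lambda>a b. if a = 0 \<and> b = 0 then 1 else 0) a b = A a b"
    unfolding bmul_def by (rule sum_sum_single[of _ _ a b]) auto
qed

lemma bcomp_embed_z_nonzeroE:
  assumes "bcomp (embed_z p) P Q a b \<noteq> 0"
  obtains i where "bpow P i a b \<noteq> 0"
proof -
  obtain i j where "embed_z p i j \<noteq> 0" "bmul (bpow P i) (bpow Q j) a b \<noteq> 0"
    using assms by (rule bcomp_nonzeroE)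
  then show thesis using that by (auto simp: embed_z_def bmul_one_right split: if_splits)
qed

lemma z_only_bpow:
  assumes "\<forall>i j. P i j \<noteq> 0 \<longrightarrow> j = 0"
  shows "bpow P n a b \<noteq> 0 \<Longrightarrow> b = 0"
proof (induction n arbitrary: a b)
  case (Suc n)
  then obtain i j where "j \<le> b" "P i j \<noteq> 0" "bpow P n (a - i) (b - j) \<noteq> 0"
    by (auto elim: bmul_nonzeroE)
  then show ?case using Suc.IH assms by fastforce
qed (simp split: if_splits)

definition gamma_seq :: "nat \<Rightarrow> nat \<Rightarrow> nat \<Rightarrow> nat \<Rightarrow> nat" where
  "gamma_seq \<gamma> \<delta> d n = \<gamma> * (\<Sum>i<n. \<delta> ^ (n - 1 - i) * d ^ i)"

lemma gamma_seq_0 [simp]: "gamma_seq \<gamma> \<delta> d 0 = 0"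
  by (simp add: gamma_seq_def)

lemma gamma_seq_Suc: "gamma_seq \<gamma> \<delta> d (Suc n) = \<gamma> * \<delta> ^ n + d * gamma_seq \<gamma> \<delta> d n"
proof -
  have "(\<Sum>i<Suc n. \<delta> ^ (Suc n - 1 - i) * d ^ i) = \<delta> ^ n + (\<Sum>i<n. \<delta> ^ (n - Suc i) * d ^ Suc i)"
    by (subst sum.lessThan_Suc_shift) simp
  also have "(\<Sum>i<n. \<delta> ^ (n - Suc i) * d ^ Suc i) = d * (\<Sum>i<n. \<delta> ^ (n - 1 - i) * d ^ i)"
    by (simp add: sum_distrib_left algebra_simps)
  finally show ?thesis unfolding gamma_seq_def by (simp add: algebra_simps)
qed

lemma gamma_seq_cone_bounds:
  fixes l1 l2 l :: real
  assumes "l1 * (real \<delta> - real d) \<le> real \<gamma>" "real \<gamma> \<le> l2 * (real \<delta> - real d)"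
    and "l1 \<le> l" "l \<le> l2"
  shows "l1 * real \<delta> ^ n \<le> real (gamma_seq \<gamma> \<delta> d n) + l * real d ^ n
    \<and> real (gamma_seq \<gamma> \<delta> d n) + l * real d ^ n \<le> l2 * real \<delta> ^ n"
proof (induction n)
  case 0
  then show ?case using assms(3,4) by simp
next
  case (Suc n)
  define X where "X = real (gamma_seq \<gamma> \<delta> d n) + l * real d ^ n"
  have rec: "real (gamma_seq \<gamma> \<delta> d (Suc n)) + l * real d ^ Suc n = real \<gamma> * real \<delta> ^ n + real d * X"
    unfolding X_def gamma_seq_Suc by (simp add: algebra_simps)
  have "l1 * real \<delta> * real \<delta> ^ n \<le> (real \<gamma> + l1 * real d) * real \<delta> ^ n"
    "(real \<gamma> + l2 * real d) * real \<delta> ^ n \<le> l2 * real \<delta> * real \<delta> ^ n"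
    using assms(1,2) by (intro mult_right_mono; simp add: algebra_simps)+
  moreover have "real d * (l1 * real \<delta> ^ n) \<le> real d * X" "real d * X \<le> real d * (l2 * real \<delta> ^ n)"
    using Suc unfolding X_def by (simp_all add: mult_left_mono)
  ultimately show ?case unfolding rec by (simp add: algebra_simps)
qed

text \<open>The slopes l1 < l2 are those of the two edges of the Newton polygon of q meeting at
  the vertex (\<gamma>, d); in the paper's notation they are l1 and l1 + l2.\<close>

locale dominant_vertex =
  fixes p :: "nat \<Rightarrow> complex" and q :: bps and \<delta> \<gamma> d :: nat and l1 l2 :: real
  assumes delta_pos: "1 \<le> \<delta>" and p_order: "p \<delta> \<noteq> 0" "\<forall>i<\<delta>. p i = 0"
    and vertex: "q \<gamma> d \<noteq> 0" and d_pos: "1 \<le> d"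
    and slopes: "0 \<le> l1" "l1 < l2"
    and lowest1: "weight_ge (1, l1) q ((1, l1) \<bullet> (real \<gamma>, real d))"
    and lowest2: "weight_ge (1, l2) q ((1, l2) \<bullet> (real \<gamma>, real d))"
    and delta_range: "l1 * (real \<delta> - real d) \<le> real \<gamma>" "real \<gamma> \<le> l2 * (real \<delta> - real d)"
begin

abbreviation P :: "nat \<Rightarrow> bps" where "P n \<equiv> fst (skew_iter p q n)"
abbreviation Q :: "nat \<Rightarrow> bps" where "Q n \<equiv> snd (skew_iter p q n)"
abbreviation g :: "nat \<Rightarrow> nat" where "g n \<equiv> gamma_seq \<gamma> \<delta> d n"

lemma skew_iter_Suc_components:
  "P (Suc n) = bcomp (embed_z p) (P n) (Q n)" "Q (Suc n) = bcomp q (P n) (Q n)"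
  by (simp_all add: split_def Let_def)

lemma gamma_seq_Suc_weight:
  "(real \<delta> ^ n, X) \<bullet> (real \<gamma>, real d) = (1, l) \<bullet> (real (g (Suc n)), real (d ^ Suc n))"
  if "X = real (g n) + l * real d ^ n"
  using that by (simp add: gamma_seq_Suc algebra_simps)

lemma gamma_seq_strict_cone_bounds:
  assumes "l1 < l" "l < l2"
  shows "l1 * real \<delta> ^ n < real (g n) + l * real d ^ n \<and> real (g n) + l * real d ^ n < l2 * real \<delta> ^ n"
proof -
  have "0 < real d ^ n" using d_pos by simp
  then have "real (g n) + l1 * real d ^ n < real (g n) + l * real d ^ n"
    "real (g n) + l * real d ^ n < real (g n) + l2 * real d ^ n"
    using assms by simp_all
  then show ?thesis
    using gamma_seq_cone_bounds[OF delta_range, of l1 n] gamma_seq_cone_bounds[OF delta_range, of l2 n]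
      slopes by auto
qed

lemma weight_ge_Suc:
  assumes "l1 \<le> l" "l \<le> l2" "z_order (P n) (\<delta> ^ n)"
    and "weight_ge (1, l) (Q n) ((1, l) \<bullet> (real (g n), real (d ^ n)))"
  shows "weight_ge (1, l) (Q (Suc n)) ((1, l) \<bullet> (real (g (Suc n)), real (d ^ Suc n)))"
proof -
  define X where "X = real (g n) + l * real d ^ n"
  have "unique_lowest_term (1, l) (P n) (\<delta> ^ n) 0"
    using assms(3) z_order_iff by blast
  then have "weight_ge (1, l) (P n) (real \<delta> ^ n)"
    using unique_lowest_term_imp_weight_ge by fastforce
  moreover have "weight_ge (1, l) (Q n) X"
    using assms(4) unfolding X_def by simp
  moreover have "weight_ge (real \<delta> ^ n, X) q ((real \<delta> ^ n, X) \<bullet> (real \<gamma>, real d))"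
    using gamma_seq_cone_bounds[OF delta_range assms(1,2), of n]
    by (intro weight_ge_cone[OF lowest1 lowest2]) (simp_all add: X_def)
  ultimately show ?thesis
    unfolding skew_iter_Suc_components gamma_seq_Suc_weight[OF X_def]
    by (rule weight_ge_bcomp)
qed

lemma z_order_Suc:
  assumes "z_order (P n) (\<delta> ^ n)" "unique_lowest_term (1, l) (Q n) (g n) (d ^ n)"
  shows "z_order (P (Suc n)) (\<delta> ^ Suc n)"
proof -
  have "unique_lowest_term (1, l) (P (Suc n)) (\<delta> * \<delta> ^ n + 0 * g n) (\<delta> * 0 + 0 * d ^ n)"
    unfolding skew_iter_Suc_components
  proof (rule unique_lowest_term_bcomp)
    show "unique_lowest_term (1, l) (P n) (\<delta> ^ n) 0"
      using assms(1) unfolding z_order_iff[where l = l] by blast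
    show "unique_lowest_term ((1, l) \<bullet> (real (\<delta> ^ n), real 0), (1, l) \<bullet> (real (g n), real (d ^ n)))
        (embed_z p) \<delta> 0"
      using p_order delta_pos by (intro unique_lowest_term_embed_z) auto
  qed (use assms(2) delta_pos d_pos in auto)
  moreover have "\<forall>i j. P (Suc n) i j \<noteq> 0 \<longrightarrow> j = 0"
  proof (intro allI impI)
    fix i j assume "P (Suc n) i j \<noteq> 0"
    then obtain k where "bpow (P n) k i j \<noteq> 0"
      unfolding skew_iter_Suc_components by (rule bcomp_embed_z_nonzeroE)
    moreover have "\<forall>i j. P n i j \<noteq> 0 \<longrightarrow> j = 0"
      using assms(1) unfolding z_order_def by blast
    ultimately show "j = 0" using z_only_bpow by blast
  qed
  ultimately show ?thesis
    unfolding z_order_iff[where l = l] by simp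
qed

lemma vertex_coeff_Suc:
  assumes "z_order (P n) (\<delta> ^ n)" "unique_lowest_term (1, l) (Q n) (g n) (d ^ n)" "l1 < l" "l < l2"
  shows "Q (Suc n) (g (Suc n)) (d ^ Suc n) \<noteq> 0"
proof -
  have "unique_lowest_term (1, l) (Q (Suc n)) (\<gamma> * \<delta> ^ n + d * g n) (\<gamma> * 0 + d * d ^ n)"
    unfolding skew_iter_Suc_components
  proof (rule unique_lowest_term_bcomp)
    show "unique_lowest_term (1, l) (P n) (\<delta> ^ n) 0"
      using assms(1) unfolding z_order_iff[where l = l] by blast
    show "unique_lowest_term ((1, l) \<bullet> (real (\<delta> ^ n), real 0), (1, l) \<bullet> (real (g n), real (d ^ n)))
        q \<gamma> d"
      using gamma_seq_strict_cone_bounds[OF assms(3,4), of n] delta_pos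
      by (intro unique_lowest_term_cone[OF vertex lowest1 lowest2]) auto
  qed (use assms(2) delta_pos d_pos in auto)
  then show ?thesis
    unfolding unique_lowest_term_def by (simp add: gamma_seq_Suc)
qed

lemma skew_iter_lowest_terms:
  "z_order (P n) (\<delta> ^ n) \<and> Q n (g n) (d ^ n) \<noteq> 0
    \<and> weight_ge (1, l1) (Q n) ((1, l1) \<bullet> (real (g n), real (d ^ n)))
    \<and> weight_ge (1, l2) (Q n) ((1, l2) \<bullet> (real (g n), real (d ^ n)))"
proof (induction n)
  case 0
  show ?case by (simp add: z_order_def zvar_def wvar_def weight_ge_def)
next
  case (Suc n)
  then have zP: "z_order (P n) (\<delta> ^ n)" and Q_low: "Q n (g n) (d ^ n) \<noteq> 0"
    "weight_ge (1, l1) (Q n) ((1, l1) \<bullet> (real (g n), real (d ^ n)))"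
    "weight_ge (1, l2) (Q n) ((1, l2) \<bullet> (real (g n), real (d ^ n)))"
    by blast+
  \<comment> \<open>At a slope strictly between l1 and l2 the lowest terms are unique.\<close>
  define l0 where "l0 = (l1 + l2) / 2"
  have l0: "l1 < l0" "l0 < l2" using slopes unfolding l0_def by auto
  have Q_unique: "unique_lowest_term (1, l0) (Q n) (g n) (d ^ n)"
    using unique_lowest_term_cone[OF Q_low, of 1 l0] l0 by simp
  show ?case
    using z_order_Suc[OF zP Q_unique] vertex_coeff_Suc[OF zP Q_unique l0]
      weight_ge_Suc[OF order_refl _ zP Q_low(2)] weight_ge_Suc[OF _ order_refl zP Q_low(3)] slopes
    by simp
qed

theorem iterate_dominant_term:
  "Q n (g n) (d ^ n) \<noteq> 0
    \<and> (real (g n), real (d ^ n)) extreme_point_of newton_polygon (Q n)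
    \<and> (\<forall>l\<in>{l1..l2}. weight l (Q n) = real (g n) + l * real (d ^ n))"
proof -
  have nz: "Q n (g n) (d ^ n) \<noteq> 0"
    and low1: "weight_ge (1, l1) (Q n) ((1, l1) \<bullet> (real (g n), real (d ^ n)))"
    and low2: "weight_ge (1, l2) (Q n) ((1, l2) \<bullet> (real (g n), real (d ^ n)))"
    using skew_iter_lowest_terms by blast+
  have "weight l (Q n) = real (g n) + l * real (d ^ n)" if "l \<in> {l1..l2}" for l
    using weight_ge_cone[OF low1 low2, of 1 l] that by (intro weight_eq_lowest[where g = "Q n", OF nz]) simp
  then show ?thesis
    using nz extreme_point_of_newton_polygon[where g = "Q n", OF nz slopes low1 low2] by blast
qed

end

section \<open>Edges of the Newton polygon\<close>

lemma yint_mult_slope: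
  fixes x1 y1 x2 y2 :: real
  assumes "x1 \<noteq> x2" "y1 \<noteq> y2"
  shows "(x2 - x1) / (y1 - y2) * yint x1 y1 x2 y2 = x1 + (x2 - x1) / (y1 - y2) * y1"
proof -
  have "(x2 - x1) / (y1 - y2) * (x1 * (y2 - y1) / (x2 - x1)) = - x1"
    using assms by (simp add: divide_simps) (simp add: algebra_simps)
  then show ?thesis unfolding yint_def by (simp add: right_diff_distrib)
qed

locale newton_vertices =
  fixes q :: bps and s :: nat and nv mv :: "nat \<Rightarrow> nat"
  assumes vertices:
      "{v. v extreme_point_of newton_polygon q} = (\<lambda>i. (real (nv i), real (mv i))) ` {1..s}"
    and nv_increasing: "\<forall>i\<in>{1..s}. \<forall>j\<in>{1..s}. i < j \<longrightarrow> nv i < nv j"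
    and mv_decreasing: "\<forall>i\<in>{1..s}. \<forall>j\<in>{1..s}. i < j \<longrightarrow> mv j < mv i"
begin

abbreviation vertex :: "nat \<Rightarrow> real \<times> real" where
  "vertex i \<equiv> (real (nv i), real (mv i))"

definition edge_slope :: "nat \<Rightarrow> real" where
  "edge_slope a = (real (nv (a + 1)) - real (nv a)) / (real (mv a) - real (mv (a + 1)))"

lemma vertex_extreme_point: "i \<in> {1..s} \<Longrightarrow> vertex i extreme_point_of newton_polygon q"
  using vertices by blast

lemma vertex_in_newton_polygon: "i \<in> {1..s} \<Longrightarrow> vertex i \<in> newton_polygon q"
  using vertex_extreme_point unfolding extreme_point_of_def by blast

lemma vertex_coeff_nonzero: "i \<in> {1..s} \<Longrightarrow> q (nv i) (mv i) \<noteq> 0"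
  by (metis Pair_inject extreme_point_of_newton_polygonE of_nat_eq_iff vertex_extreme_point)

lemma edge_slope_pos: "1 \<le> a \<Longrightarrow> a < s \<Longrightarrow> 0 < edge_slope a"
  using nv_increasing mv_decreasing unfolding edge_slope_def by (simp add: divide_pos_pos)

lemma edge_weight_eq:
  assumes "1 \<le> a" "a < s"
  shows "(1, edge_slope a) \<bullet> vertex (a + 1) = (1, edge_slope a) \<bullet> vertex a"
proof -
  have "mv (a + 1) < mv a" using mv_decreasing assms by simp
  then show ?thesis unfolding edge_slope_def by (simp add: field_simps)
qed

lemma edge_slope_mult_yint:
  assumes "1 \<le> a" "a < s"
  shows "edge_slope a * yint (real (nv a)) (real (mv a)) (real (nv (a + 1))) (real (mv (a + 1)))
    = (1, edge_slope a) \<bullet> vertex a"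
proof -
  have "nv a < nv (a + 1)" "mv (a + 1) < mv a"
    using nv_increasing mv_decreasing assms by simp_all
  then show ?thesis
    unfolding edge_slope_def by (subst yint_mult_slope) auto
qed

lemma le_yint_imp_edge_bound:
  assumes "1 \<le> a" "a < s"
    and "x \<le> yint (real (nv a)) (real (mv a)) (real (nv (a + 1))) (real (mv (a + 1)))"
  shows "edge_slope a * (x - real (mv (a + 1))) \<le> real (nv (a + 1))"
  using mult_left_mono[OF assms(3) less_imp_le[OF edge_slope_pos[OF assms(1,2)]]]
    edge_slope_mult_yint[OF assms(1,2)] edge_weight_eq[OF assms(1,2)]
  by (simp add: algebra_simps)

lemma yint_le_imp_edge_bound:
  assumes "1 \<le> a" "a < s"
    and "yint (real (nv a)) (real (mv a)) (real (nv (a + 1))) (real (mv (a + 1))) \<le> x"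
  shows "real (nv a) \<le> edge_slope a * (x - real (mv a))"
  using mult_left_mono[OF assms(3) less_imp_le[OF edge_slope_pos[OF assms(1,2)]]]
    edge_slope_mult_yint[OF assms(1,2)]
  by (simp add: algebra_simps)

lemma weight_ge_edge:
  assumes a: "1 \<le> a" "a < s"
  shows "weight_ge (1, edge_slope a) q ((1, edge_slope a) \<bullet> vertex a)"
  unfolding weight_ge_def
proof (intro allI impI, rule ccontr)
  fix i0 j0
  let ?l = "edge_slope a"
  assume "q i0 j0 \<noteq> 0" and below: "\<not> (1, ?l) \<bullet> vertex a \<le> (1, ?l) \<bullet> (real i0, real j0)"
  obtain v where "v extreme_point_of newton_polygon q" "(1, ?l) \<bullet> v \<le> (1, ?l) \<bullet> (real i0, real j0)"
    using newton_polygon_extreme_point_le[where g = q, OF \<open>q i0 j0 \<noteq> 0\<close> edge_slope_pos[OF a]] .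
  moreover obtain i where i: "i \<in> {1..s}" "v = vertex i"
    using vertices \<open>v extreme_point_of _\<close> by blast
  ultimately have lower: "(1, ?l) \<bullet> vertex i < (1, ?l) \<bullet> vertex a"
    using below by simp
  have ends: "a \<in> {1..s}" "a + 1 \<in> {1..s}" using a by auto
  note edge = edge_weight_eq[OF a]
  consider "i < a" | "i = a" | "i = a + 1" | "a + 1 < i" by linarith
  then show False
  proof cases
    case 1
    have "\<not> vertex a extreme_point_of newton_polygon q"
      using nv_increasing i(1) ends 1 lower edge
      by (intro not_extreme_point_between[OF vertex_in_newton_polygon[OF i(1)]
            vertex_in_newton_polygon[OF ends(2)] _ _ edge_slope_pos[OF a]]) auto
    then show False using vertex_extreme_point[OF ends(1)] by blast
  next
    case 4
    have "\<not> vertex (a + 1) extreme_point_of newton_polygon q"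
      using nv_increasing i(1) ends 4 lower edge
      by (intro not_extreme_point_between[OF vertex_in_newton_polygon[OF ends(1)]
            vertex_in_newton_polygon[OF i(1)] _ _ edge_slope_pos[OF a]]) auto
    then show False using vertex_extreme_point[OF ends(2)] by blast
  qed (use lower edge in auto)
qed

lemma edge_slope_increasing:
  assumes a: "1 < a" "a < s"
  shows "edge_slope (a - 1) < edge_slope a"
proof (rule ccontr)
  let ?l = "edge_slope (a - 1)"
  assume "\<not> ?l < edge_slope a"
  have a': "1 \<le> a - 1" "a - 1 < s" and idx: "a - 1 + 1 = a"
    and ends: "a - 1 \<in> {1..s}" "a \<in> {1..s}" "a + 1 \<in> {1..s}" using a by auto
  have step: "nv (a - 1) < nv a" "nv a < nv (a + 1)" "mv (a + 1) < mv a"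
    using nv_increasing mv_decreasing ends by auto
  have "real (nv (a + 1)) - real (nv a) = edge_slope a * (real (mv a) - real (mv (a + 1)))"
    using step unfolding edge_slope_def by simp
  also have "\<dots> \<le> ?l * (real (mv a) - real (mv (a + 1)))"
    using \<open>\<not> ?l < edge_slope a\<close> step by (intro mult_right_mono) auto
  finally have right: "(1, ?l) \<bullet> vertex (a + 1) \<le> (1, ?l) \<bullet> vertex a"
    by (simp add: algebra_simps)
  have "\<not> vertex a extreme_point_of newton_polygon q"
    using step edge_weight_eq[OF a'] right unfolding idx
    by (intro not_extreme_point_between[OF vertex_in_newton_polygon[OF ends(1)]
          vertex_in_newton_polygon[OF ends(3)] _ _ edge_slope_pos[OF a']]) auto
  then show False using vertex_extreme_point[OF ends(2)] by blast
qed

end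

theorem theorem6p1:
  fixes p :: "nat \<Rightarrow> complex" and q :: bps and \<delta> s k :: nat
    and nv mv :: "nat \<Rightarrow> nat"
  defines "T \<equiv> (\<lambda>j. yint (real (nv j)) (real (mv j)) (real (nv (j+1))) (real (mv (j+1))))"
    and "\<gamma> \<equiv> nv k" and "d \<equiv> mv k"
    and "l1 \<equiv> (real (nv k) - real (nv (k-1))) / (real (mv (k-1)) - real (mv k))"
    and "l2 \<equiv> (real (nv (k+1)) - real (nv k)) / (real (mv k) - real (mv (k+1)))
              - (real (nv k) - real (nv (k-1))) / (real (mv (k-1)) - real (mv k))"
  assumes hp: "conv_germ1 p" and hq: "conv_germ2 q"
    and hdelta: "\<delta> \<ge> 1" and hpd: "p \<delta> \<noteq> 0" and hplow: "\<forall>i<\<delta>. p i = 0"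
    and hq0: "q 0 0 = 0" and hqnz: "\<exists>i j. q i j \<noteq> 0"
    and hvert: "{v. v extreme_point_of newton_polygon q} = (\<lambda>i. (real (nv i), real (mv i))) ` {1..s}"
    and hnv: "\<forall>i\<in>{1..s}. \<forall>j\<in>{1..s}. i < j \<longrightarrow> nv i < nv j"
    and hmv: "\<forall>i\<in>{1..s}. \<forall>j\<in>{1..s}. i < j \<longrightarrow> mv j < mv i"
    and case4: "s > 2" "2 \<le> k" "k \<le> s - 1" "T k \<le> real \<delta>" "real \<delta> \<le> T (k - 1)"
  shows "\<forall>n\<ge>1. let Qn = snd (skew_iter p q n);
                   gn = \<gamma> * (\<Sum>i<n. \<delta> ^ (n - 1 - i) * d ^ i)
               in Qn gn (d ^ n) \<noteq> 0
                  \<and> (real gn, real (d ^ n)) extreme_point_of newton_polygon Qn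
                  \<and> (\<forall>l\<in>{l1..l1 + l2}. weight l Qn = weight l (monom gn (d ^ n))
                        \<and> weight l (monom gn (d ^ n)) = real gn + l * real (d ^ n))"
proof -
  interpret V: newton_vertices q s nv mv
    using hvert hnv hmv by unfold_locales
  have k: "1 \<le> k - 1" "k - 1 < s" "1 \<le> k" "k < s" "1 < k" "k - 1 + 1 = k" "k \<in> {1..s}"
    using case4 by auto
  define \<sigma>1 \<sigma>2 where "\<sigma>1 = V.edge_slope (k - 1)" and "\<sigma>2 = V.edge_slope k"
  have "\<sigma>1 * (real \<delta> - real d) \<le> real \<gamma>"
    using V.le_yint_imp_edge_bound[OF k(1,2), of "real \<delta>"] case4(5)
    unfolding \<sigma>1_def T_def \<gamma>_def d_def k(6) by simp
  moreover have "real \<gamma> \<le> \<sigma>2 * (real \<delta> - real d)"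
    using V.yint_le_imp_edge_bound[OF k(3,4) case4(4)[unfolded T_def]]
    unfolding \<sigma>2_def \<gamma>_def d_def .
  moreover have "mv (k + 1) < mv k"
    using hmv k(3,4) by simp
  then have "1 \<le> d" unfolding d_def by linarith
  ultimately interpret D: dominant_vertex p q \<delta> \<gamma> d \<sigma>1 \<sigma>2
    using hdelta hpd hplow V.vertex_coeff_nonzero[OF k(7)] V.edge_slope_increasing[OF k(5,4)]
      V.edge_slope_pos[OF k(1,2)] V.weight_ge_edge[OF k(1,2)] V.weight_ge_edge[OF k(3,4)]
      V.edge_weight_eq[OF k(1,2)]
    unfolding \<sigma>1_def \<sigma>2_def \<gamma>_def d_def k(6)
    by unfold_locales (simp_all add: algebra_simps)
  have "l1 = \<sigma>1" "l1 + l2 = \<sigma>2"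
    unfolding l1_def l2_def \<sigma>1_def \<sigma>2_def V.edge_slope_def using k(6) by simp_all
  then show ?thesis
    using D.iterate_dominant_term by (simp add: Let_def gamma_seq_def weight_monom)
qed

end
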